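(* If $T\leq T'$ is derivable in the system of subtyping rules below extended with the reflexivity rule $T\leq T$ and the transitivity rule (from $T\leq T'$ and $T'\leq T''$ infer $T\leq T''$), then $T\leq T'$ is derivable using only the rules below.
   Context: Types: raw types $R ::= \alpha \mid S\rightarrow T$ ($\alpha$ ranging over atomic types), subsidiary types $S ::= \bigcap R$ (a finite formal intersection $R_1\cap\dots\cap R_n$, $n\geq 0$; the empty one is written $\omega$), types $T ::= \bigcup S$ (a finite formal union $S_1\cup\dots\cup S_n$, $n\ge 0$; the empty one is written $\mho$). Intersections and unions are taken modulo associativity and commutativity only (not idempotence); a raw type is identified with a one-element intersection and a subsidiary type with a one-element union. Subtyping rules ($S,S',S'',S_i$ subsidiary types; $T,T',T'',T_i$ types; $i$ over a finite, possibly empty, index set): $\alpha\leq\alpha$; from $S'\leq S$ and $T\leq T'$ infer $S\rightarrow T\leq S'\rightarrow T'$; from $S\leq S'$ infer $S\cap S''\leq S'$; from $S\leq S_i$ for all $i$ infer $S\leq\bigcap_i S_i$; from $T\leq T'$ infer $T\leq T''\cup T'$; from $T_i\leq T$ for all $i$ infer $\bigcup_i T_i\leq T$. *)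

theory Defs
  imports "HOL-Library.Multiset"
begin

text \<open>A subsidiary type is a finite formal
intersection of raw types (multiset of raw types, modulo AC only, no idempotence);
a type is a finite formal union of subsidiary types (multiset of subsidiary types).\<close>

datatype 'a raw = Atom 'a | Arr "'a raw multiset" "'a raw multiset multiset"

type_synonym 'a subs = "'a raw multiset"
type_synonym 'a ty = "'a raw multiset multiset"

text \<open>Identifications: a raw type R is the subsidiary type {#R#}; a subsidiary
type S is the type {#S#}.  Intersection of subsidiary types is multiset sum
(on 'a subs); union of types is multiset sum (on 'a ty).\<close>

inductive sub :: "'a ty \<Rightarrow> 'a ty \<Rightarrow> bool" where
  atom: "sub {#{#Atom a#}#} {#{#Atom a#}#}"
| arr: "sub {#S'#} {#S#} \<Longrightarrow> sub T T' \<Longrightarrow> sub {#{#Arr S T#}#} {#{#Arr S' T'#}#}"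
| inter_left: "sub {#S#} {#S'#} \<Longrightarrow> sub {#S + S''#} {#S'#}"
| inter_right: "(\<And>Si. Si \<in># Ss \<Longrightarrow> sub {#S#} {#Si#}) \<Longrightarrow> sub {#S#} {#sum_mset Ss#}"
| union_right: "sub T T' \<Longrightarrow> sub T (T'' + T')"
| union_left: "(\<And>Ti. Ti \<in># Ts \<Longrightarrow> sub Ti T) \<Longrightarrow> sub (sum_mset Ts) T"

inductive sub_rt :: "'a ty \<Rightarrow> 'a ty \<Rightarrow> bool" where
  atom: "sub_rt {#{#Atom a#}#} {#{#Atom a#}#}"
| arr: "sub_rt {#S'#} {#S#} \<Longrightarrow> sub_rt T T' \<Longrightarrow> sub_rt {#{#Arr S T#}#} {#{#Arr S' T'#}#}"
| inter_left: "sub_rt {#S#} {#S'#} \<Longrightarrow> sub_rt {#S + S''#} {#S'#}"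
| inter_right: "(\<And>Si. Si \<in># Ss \<Longrightarrow> sub_rt {#S#} {#Si#}) \<Longrightarrow> sub_rt {#S#} {#sum_mset Ss#}"
| union_right: "sub_rt T T' \<Longrightarrow> sub_rt T (T'' + T')"
| union_left: "(\<And>Ti. Ti \<in># Ts \<Longrightarrow> sub_rt Ti T) \<Longrightarrow> sub_rt (sum_mset Ts) T"
| refl: "sub_rt T T"
| trans: "sub_rt T T' \<Longrightarrow> sub_rt T' T'' \<Longrightarrow> sub_rt T T''"

end

theory Submission imports Defs begin

text \<open>Each rule of \<open>sub\<close> is syntax-directed on one side, so derivability inverts:
\<open>T \<le> T'\<close> holds iff every member of \<open>T\<close> is below some member of \<open>T'\<close>, an
intersection is below another iff it is below each of its components, an
intersection is below a raw type iff one of its components is, and two raw types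
compare iff they are equal atoms or arrows with contravariant domains and covariant
codomains.  Reflexivity then follows by induction on raw types, and transitivity by
induction on the middle raw type: in the arrow case the middle domain and codomain
are again the middle terms of the two component comparisons.\<close>

lemma sum_mset_eq_singleD:
  assumes "sum_mset Ts = {#x#}"
  shows "{#x#} \<in># Ts"
proof -
  have "x \<in># sum_mset Ts" using assms by simp
  then obtain Ti where Ti: "Ti \<in># Ts" "x \<in># Ti" by (auto simp: in_Union_mset_iff)
  then obtain Rest where "Ts = add_mset Ti Rest" by (metis multi_member_split)
  then have "Ti + sum_mset Rest = {#x#}" using assms by simp
  then have "Ti = {#x#}" using Ti(2) by (auto simp: union_is_single)
  with Ti(1) show ?thesis by simp
qed

text \<open>The four inversion equivalences below must not be used as simp rules: each
right-hand side contains an instance of its left-hand side.\<close>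

lemma sub_iff_sub_members: "sub T T' \<longleftrightarrow> (\<forall>S\<in>#T. sub {#S#} T')"
proof
  show "\<forall>S\<in>#T. sub {#S#} T'" if "sub T T'"
    using that
  proof (induction rule: sub.induct)
    case (union_left Ts T)
    then show ?case by (auto simp: in_Union_mset_iff)
  qed (auto intro: sub.intros)
  show "sub T T'" if "\<forall>S\<in>#T. sub {#S#} T'"
    using that sub.union_left[of "image_mset (\<lambda>S. {#S#}) T" T'] by auto
qed

lemma sub_single_left_iff: "sub {#S#} T' \<longleftrightarrow> (\<exists>S'\<in>#T'. sub {#S#} {#S'#})"
proof
  show "\<exists>S'\<in>#T'. sub {#S#} {#S'#}" if "sub {#S#} T'"
    using that
  proof (induction "{#S#}" T' arbitrary: S rule: sub.induct)
    case (union_left Ts T)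
    then show ?case by (metis sum_mset_eq_singleD)
  qed (auto intro: sub.intros)
  show "sub {#S#} T'" if "\<exists>S'\<in>#T'. sub {#S#} {#S'#}"
    using that by (metis sub.union_right insert_DiffM2 add_mset_add_single)
qed

lemma not_sub_empty: "\<not> sub {#S#} {#}"
  using sub_single_left_iff[of S "{#}"] by simp

lemma summand_eq_single_if_sub:
  assumes "T'' + T' = {#x#}" "sub {#S#} T'"
  shows "T' = {#x#}"
  using assms not_sub_empty by (auto simp: union_is_single)

lemma sub_subs_iff: "sub {#S#} {#S'#} \<longleftrightarrow> (\<forall>R'\<in>#S'. sub {#S#} {#{#R'#}#})"
proof
  show "\<forall>R'\<in>#S'. sub {#S#} {#{#R'#}#}" if "sub {#S#} {#S'#}"
    using that
  proof (induction "{#S#}" "{#S'#}" arbitrary: S S' rule: sub.induct)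
    case (inter_right Ss S)
    then show ?case by (auto simp: in_Union_mset_iff)
  next
    case (union_right T' T'')
    then show ?case by (metis summand_eq_single_if_sub)
  next
    case (union_left Ts)
    then show ?case by (metis sum_mset_eq_singleD)
  qed (auto intro: sub.intros)
  show "sub {#S#} {#S'#}" if "\<forall>R'\<in>#S'. sub {#S#} {#{#R'#}#}"
    using that sub.inter_right[of "image_mset (\<lambda>R. {#R#}) S'" S] by auto
qed

lemma sub_subs_raw_iff: "sub {#S#} {#{#R'#}#} \<longleftrightarrow> (\<exists>R\<in>#S. sub {#{#R#}#} {#{#R'#}#})"
proof
  show "\<exists>R\<in>#S. sub {#{#R#}#} {#{#R'#}#}" if "sub {#S#} {#{#R'#}#}"
    using that
  proof (induction "{#S#}" "{#{#R'#}#}" arbitrary: S rule: sub.induct)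
    case (inter_right Ss S)
    then show ?case by (metis sum_mset_eq_singleD single_eq_single)
  next
    case (union_right T' T'')
    then show ?case by (metis summand_eq_single_if_sub)
  next
    case (union_left Ts)
    then show ?case by (metis sum_mset_eq_singleD)
  qed (auto intro: sub.intros)
  show "sub {#S#} {#{#R'#}#}" if "\<exists>R\<in>#S. sub {#{#R#}#} {#{#R'#}#}"
    using that by (metis sub.inter_left insert_DiffM add_mset_add_single add.commute)
qed

lemma sub_raw_cases:
  assumes "sub {#{#R#}#} {#{#R'#}#}"
  obtains a where "R = Atom a" "R' = Atom a"
  | S U S' U' where "R = Arr S U" "R' = Arr S' U'" "sub {#S'#} {#S#}" "sub U U'"
proof -
  have "(\<exists>a. R = Atom a \<and> R' = Atom a) \<or>
    (\<exists>S U S' U'. R = Arr S U \<and> R' = Arr S' U' \<and> sub {#S'#} {#S#} \<and> sub U U')"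
    using assms
  proof (induction "{#{#R#}#}" "{#{#R'#}#}" arbitrary: R R' rule: sub.induct)
    case (inter_left S S' S'')
    have "S \<noteq> {#}"
      using inter_left sub_subs_raw_iff[of "{#}"] by force
    with inter_left show ?case by (auto simp: union_is_single)
  next
    case (inter_right Ss)
    then show ?case by (metis sum_mset_eq_singleD single_eq_single)
  next
    case (union_right T' T'')
    then show ?case by (metis summand_eq_single_if_sub)
  next
    case (union_left Ts)
    then show ?case by (metis sum_mset_eq_singleD)
  qed auto
  with that show thesis by blast
qed

lemma sub_refl_of_raw_refl:
  assumes "\<And>S R. S \<in># T \<Longrightarrow> R \<in># S \<Longrightarrow> sub {#{#R#}#} {#{#R#}#}"
  shows "sub T T"
proof -
  have "sub {#S#} {#{#R#}#}" if "S \<in># T" "R \<in># S" for S R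
    using assms that by (blast intro: sub_subs_raw_iff[THEN iffD2])
  then have "sub {#S#} {#S#}" if "S \<in># T" for S
    using that by (blast intro: sub_subs_iff[THEN iffD2])
  then show ?thesis
    by (blast intro: sub_iff_sub_members[THEN iffD2] sub_single_left_iff[THEN iffD2])
qed

lemma sub_raw_refl: "sub {#{#R#}#} {#{#R#}#}"
proof (induction R)
  case (Atom a)
  show ?case by (rule sub.atom)
next
  case (Arr S T)
  have "sub {#S#} {#S#}" "sub T T"
    using Arr.IH by (auto intro: sub_refl_of_raw_refl)
  then show ?case by (rule sub.arr)
qed

lemma sub_refl: "sub T T"
  using sub_refl_of_raw_refl sub_raw_refl by blast

definition sub_trans_through :: "'a raw \<Rightarrow> bool" where
  "sub_trans_through R2 \<longleftrightarrow> (\<forall>R1 R3. sub {#{#R1#}#} {#{#R2#}#} \<longrightarrow>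
     sub {#{#R2#}#} {#{#R3#}#} \<longrightarrow> sub {#{#R1#}#} {#{#R3#}#})"

lemma sub_subs_trans:
  assumes trans_through: "\<And>R. R \<in># S2 \<Longrightarrow> sub_trans_through R"
    and "sub {#S1#} {#S2#}" "sub {#S2#} {#S3#}"
  shows "sub {#S1#} {#S3#}"
proof (rule sub_subs_iff[THEN iffD2], intro ballI)
  fix R3 assume "R3 \<in># S3"
  with \<open>sub {#S2#} {#S3#}\<close> obtain R2 where "R2 \<in># S2" "sub {#{#R2#}#} {#{#R3#}#}"
    by (meson sub_subs_iff sub_subs_raw_iff)
  moreover from \<open>R2 \<in># S2\<close> \<open>sub {#S1#} {#S2#}\<close> obtain R1
    where "R1 \<in># S1" "sub {#{#R1#}#} {#{#R2#}#}"
    by (meson sub_subs_iff sub_subs_raw_iff)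
  ultimately show "sub {#S1#} {#{#R3#}#}"
    using trans_through unfolding sub_trans_through_def
    by (meson sub_subs_raw_iff)
qed

lemma sub_trans_of_trans_through:
  assumes trans_through: "\<And>S R. S \<in># T2 \<Longrightarrow> R \<in># S \<Longrightarrow> sub_trans_through R"
    and "sub T1 T2" "sub T2 T3"
  shows "sub T1 T3"
proof (rule sub_iff_sub_members[THEN iffD2], intro ballI)
  fix S1 assume "S1 \<in># T1"
  with \<open>sub T1 T2\<close> obtain S2 where "S2 \<in># T2" "sub {#S1#} {#S2#}"
    by (meson sub_iff_sub_members sub_single_left_iff)
  moreover from \<open>S2 \<in># T2\<close> \<open>sub T2 T3\<close> obtain S3
    where "S3 \<in># T3" "sub {#S2#} {#S3#}"
    by (meson sub_iff_sub_members sub_single_left_iff)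
  ultimately show "sub {#S1#} T3"
    using trans_through sub_subs_trans sub_single_left_iff by meson
qed

lemma sub_trans_through_all: "sub_trans_through R"
proof (induction R)
  case (Atom a)
  have "R1 = Atom a" if "sub {#{#R1#}#} {#{#Atom a#}#}" for R1
    using that by (cases rule: sub_raw_cases) auto
  moreover have "R3 = Atom a" if "sub {#{#Atom a#}#} {#{#R3#}#}" for R3
    using that by (cases rule: sub_raw_cases) auto
  ultimately show ?case
    unfolding sub_trans_through_def by (blast intro: sub.atom)
next
  case (Arr S2 U2)
  show ?case unfolding sub_trans_through_def
  proof (intro allI impI)
    fix R1 R3
    assume "sub {#{#R1#}#} {#{#Arr S2 U2#}#}" "sub {#{#Arr S2 U2#}#} {#{#R3#}#}"
    then obtain S1 U1 S3 U3 where
      "R1 = Arr S1 U1" "sub {#S2#} {#S1#}" "sub U1 U2" and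
      "R3 = Arr S3 U3" "sub {#S3#} {#S2#}" "sub U2 U3"
      by (elim sub_raw_cases) auto
    moreover have "sub {#S3#} {#S1#}"
      using sub_subs_trans Arr.IH(1) \<open>sub {#S3#} {#S2#}\<close> \<open>sub {#S2#} {#S1#}\<close> by blast
    moreover have "sub U1 U3"
      using sub_trans_of_trans_through Arr.IH(2) \<open>sub U1 U2\<close> \<open>sub U2 U3\<close> by blast
    ultimately show "sub {#{#R1#}#} {#{#R3#}#}"
      by (simp add: sub.arr)
  qed
qed

lemma sub_trans: "sub T1 T2 \<Longrightarrow> sub T2 T3 \<Longrightarrow> sub T1 T3"
  using sub_trans_of_trans_through sub_trans_through_all by blast

theorem lemma3p4:
  fixes T T' :: "'a ty"
  assumes "sub_rt T T'"
  shows "sub T T'"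
  using assms
proof (induction rule: sub_rt.induct)
  case (inter_right Ss S)
  then show ?case by (auto intro: sub.inter_right)
next
  case (union_left Ts T)
  then show ?case by (auto intro: sub.union_left)
next
  case (trans T T' T'')
  then show ?case by (blast intro: sub_trans)
qed (auto intro: sub.intros sub_refl)

end
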